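(* Let $a_1,\dots,a_J\in\mathbb{C}$ and $0<\delta<1$. Then $$\int_{(\mathbb{R}/\mathbb{Z})^J}\frac{d\theta_1\cdots d\theta_J}{|\sum_{j=1}^Ja_je^{2\pi i\theta_j}|^\delta}=\int_{(\mathbb{R}/\mathbb{Z})^{J-1}}\frac{d\theta_1\cdots d\theta_{J-1}}{|\sum_{j=1}^{J-1}a_je^{2\pi i\theta_j}+a_J|^\delta}\sim\frac{1}{(\sum_{j=1}^J|a_j|)^\delta},$$ where the implied constants depend only on $\delta$ and $J$ (with $1/0=\infty$). *)

theory Defs
  imports "HOL-Analysis.Analysis"
begin

text \<open>The torus (R/Z)^n, realised as [0,1)^n with Lebesgue (product) measure,
  coordinates indexed by {..<n}.\<close>
definition torus :: "nat \<Rightarrow> (nat \<Rightarrow> real) measure" where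
  "torus n = PiM {..<n} (\<lambda>_. restrict_space lborel {0..<1})"

definition inv_abs_powr :: "real \<Rightarrow> complex \<Rightarrow> ennreal" where
  "inv_abs_powr \<delta> z = (if z = 0 then \<infinity> else ennreal (1 / (norm z powr \<delta>)))"

definition inv_powr :: "real \<Rightarrow> real \<Rightarrow> ennreal" where
  "inv_powr \<delta> x = (if x = 0 then \<infinity> else ennreal (1 / (x powr \<delta>)))"

definition e2pi :: "real \<Rightarrow> complex" where
  "e2pi t = exp (2 * complex_of_real pi * \<i> * complex_of_real t)"

end

theory Submission
  imports Defs "HOL-Probability.Probability"
begin

text \<open>
  The integrand is invariant under rotating the sum, so integrating out the last angle and
  shifting the other angles by it removes one angle and leaves the last coefficient as a
  constant term.
  The lower bound is the triangle inequality \<open>\<bar>\<Sum>\<^sub>j a\<^sub>j e(\<theta>\<^sub>j)\<bar> \<le> \<Sum>\<^sub>j \<bar>a\<^sub>j\<bar>\<close>. For the upper bound,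
  integrate first over the angle of a coefficient \<open>a\<^sub>m\<close> of maximal modulus, so that
  \<open>\<bar>a\<^sub>m\<bar> \<ge> (\<Sum>\<^sub>j \<bar>a\<^sub>j\<bar>) / J\<close>. The inner integral is
  \<open>\<bar>a\<^sub>m\<bar>\<^sup>-\<^sup>\<delta> \<integral>\<^sub>0\<^sup>1 \<bar>e(y) - p\<bar>\<^sup>-\<^sup>\<delta> dy\<close>, and this is bounded uniformly in \<open>p\<close>: the set where
  \<open>\<bar>e(y) - p\<bar> \<le> s\<close> has measure at most \<open>6 s\<close>, so the contributions of the dyadic shells
  \<open>\<bar>e(y) - p\<bar> \<approx> 2\<^sup>-\<^sup>k\<close> form a geometric series, convergent since \<open>\<delta> < 1\<close>.
\<close>

section \<open>The additive character of the circle\<close>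

lemma e2pi_add: "e2pi (x + y) = e2pi x * e2pi y"
  unfolding e2pi_def by (simp add: distrib_left exp_add[symmetric] algebra_simps)

lemma e2pi_conv_exp_i: "e2pi x = exp (\<i> * complex_of_real (2 * pi * x))"
  unfolding e2pi_def by (simp add: algebra_simps)

lemma norm_e2pi [simp]: "norm (e2pi x) = 1"
  by (simp only: e2pi_conv_exp_i norm_exp_i_times)

lemma e2pi_of_int [simp]: "e2pi (of_int k) = 1"
  unfolding e2pi_def by (simp add: exp_eq_1)

lemma e2pi_uminus_mult: "e2pi (- x) * e2pi x = 1"
  using e2pi_add[of "- x" x] by (simp add: e2pi_def)

lemma e2pi_frac [simp]: "e2pi (frac x) = e2pi x"
  using e2pi_add[of "frac x" "of_int \<lfloor>x\<rfloor>"] by (simp add: frac_def)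

lemma e2pi_add_1 [simp]: "e2pi (x + 1) = e2pi x"
  and e2pi_diff_1 [simp]: "e2pi (x - 1) = e2pi x"
  using e2pi_of_int[of 1] e2pi_add[of x 1] e2pi_add[of "x - 1" 1] by auto

lemma borel_measurable_e2pi [measurable]: "e2pi \<in> borel_measurable borel"
  unfolding e2pi_def by (intro borel_measurable_continuous_onI continuous_intros)

lemma borel_measurable_inv_abs_powr [measurable]: "inv_abs_powr d \<in> borel_measurable borel"
  unfolding inv_abs_powr_def by measurable

lemma inv_abs_powr_unit_mult: "norm u = 1 \<Longrightarrow> inv_abs_powr d (u * z) = inv_abs_powr d z"
  unfolding inv_abs_powr_def by (auto simp: norm_mult)

lemma inv_abs_powr_mult:
  "A \<noteq> 0 \<Longrightarrow> inv_abs_powr d (A * z) = ennreal (1 / norm A powr d) * inv_abs_powr d z"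
  unfolding inv_abs_powr_def
  by (auto simp: norm_mult ennreal_mult_top powr_mult ennreal_mult[symmetric])

section \<open>Translation invariance of the torus measure\<close>

abbreviation uniform01 :: "real measure" where
  "uniform01 \<equiv> restrict_space lborel {0..<1}"

lemma prob_space_uniform01: "prob_space uniform01"
  by (rule prob_space_restrict_space) auto

lemma product_prob_space_uniform01: "product_prob_space (\<lambda>_::nat. uniform01)"
  by (intro product_prob_spaceI prob_space_uniform01)

lemma emeasure_space_PiM_uniform01:
  "emeasure (PiM I (\<lambda>_::nat. uniform01)) (space (PiM I (\<lambda>_. uniform01))) = 1"
  by (intro prob_space.emeasure_space_1 prob_space_PiM prob_space_uniform01)

lemma borel_measurable_frac [measurable]: "(frac :: real \<Rightarrow> real) \<in> borel_measurable borel"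
  unfolding frac_def by measurable

lemma measurable_frac_shift_uniform01: "(\<lambda>x. frac (x + t)) \<in> measurable uniform01 uniform01"
  by (intro measurable_restrict_space1 measurable_restrict_space2) (auto simp: frac_lt_1)

lemma measurable_sum_e2pi:
  assumes "{..<m} \<subseteq> I"
  shows "(\<lambda>\<theta>. \<Sum>j<m. a j * e2pi (\<theta> j)) \<in> borel_measurable (PiM I (\<lambda>_. uniform01))"
proof (intro borel_measurable_sum borel_measurable_times measurable_const)
  fix j assume "j \<in> {..<m}"
  then have "(\<lambda>\<theta>. \<theta> j) \<in> measurable (PiM I (\<lambda>_. uniform01)) uniform01"
    using assms by (intro measurable_component_singleton) auto
  moreover have "e2pi \<in> borel_measurable uniform01"
    by (rule measurable_restrict_space1) measurable
  ultimately show "(\<lambda>\<theta>. e2pi (\<theta> j)) \<in> borel_measurable (PiM I (\<lambda>_. uniform01))"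
    by (rule measurable_compose)
qed simp

lemma emeasure_lborel_translate:
  assumes "X \<in> sets borel"
  shows "emeasure lborel ((+) (c::real) -` X) = emeasure lborel X"
proof -
  have "emeasure lborel X = emeasure (distr lborel borel ((+) c)) X"
    by (simp add: lborel_distr_plus)
  also have "\<dots> = emeasure lborel ((+) c -` X)"
    using assms by (subst emeasure_distr) auto
  finally show ?thesis by simp
qed

lemma frac_add_unit_interval:
  fixes x s :: real
  assumes "0 \<le> x" "x < 1" "0 \<le> s" "s < 1"
  shows "frac (x + s) = (if x + s < 1 then x + s else x + s - 1)"
  using assms frac_eq[of "x + s"] frac_eq[of "x + s - 1"] frac_1_eq[of "x + s - 1"] by auto

text \<open>With \<open>s = frac t\<close>, the map \<open>x \<mapsto> frac (x + t)\<close> translates \<open>[0, 1 - s)\<close> onto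
  \<open>[s, 1)\<close> and \<open>[1 - s, 1)\<close> onto \<open>[0, s)\<close>.\<close>
lemma distr_uniform01_frac_shift: "distr uniform01 uniform01 (\<lambda>x. frac (x + t)) = uniform01"
proof (rule measure_eqI)
  fix A assume "A \<in> sets (distr uniform01 uniform01 (\<lambda>x. frac (x + t)))"
  then have A: "A \<in> sets uniform01" by simp
  then have Ab: "A \<in> sets borel" and Asub: "A \<subseteq> {0..<1}"
    by (auto simp: sets_restrict_space_iff)
  define s where "s = frac t"
  have s: "0 \<le> s" "s < 1" by (auto simp: s_def frac_lt_1)
  have frac_t: "frac (x + t) = frac (x + s)" for x
    using frac_add_of_int_right[of "x + s" "\<lfloor>t\<rfloor>"] by (simp add: s_def frac_def add.assoc)
  define B1 where "B1 = (+) s -` (A \<inter> {s..<1})"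
  define B2 where "B2 = (+) (s - 1) -` (A \<inter> {0..<s})"
  have preimage: "(\<lambda>x. frac (x + t)) -` A \<inter> space uniform01 = B1 \<union> B2"
  proof (intro set_eqI iffI)
    fix x assume "x \<in> (\<lambda>x. frac (x + t)) -` A \<inter> space uniform01"
    then show "x \<in> B1 \<union> B2"
      using frac_add_unit_interval[of x s] s by (auto simp: frac_t B1_def B2_def add_diff_eq add.commute split: if_splits)
  next
    fix x assume "x \<in> B1 \<union> B2"
    then show "x \<in> (\<lambda>x. frac (x + t)) -` A \<inter> space uniform01"
      using Asub s frac_add_unit_interval[of x s] by (auto simp: frac_t B1_def B2_def add_diff_eq add.commute)
  qed
  have B: "B1 \<in> sets borel" "B2 \<in> sets borel" "B1 \<inter> B2 = {}"
    using Ab by (auto simp: B1_def B2_def)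
  have "emeasure (distr uniform01 uniform01 (\<lambda>x. frac (x + t))) A = emeasure uniform01 (B1 \<union> B2)"
    using A measurable_frac_shift_uniform01[of t] by (simp add: emeasure_distr preimage[symmetric] del: space_restrict_space)
  also have "\<dots> = emeasure lborel (B1 \<union> B2)"
    using B preimage by (subst emeasure_restrict_space) auto
  also have "\<dots> = emeasure lborel B1 + emeasure lborel B2"
    using B by (simp add: plus_emeasure)
  also have "\<dots> = emeasure lborel (A \<inter> {s..<1}) + emeasure lborel (A \<inter> {0..<s})"
    unfolding B1_def B2_def using Ab
    by (intro arg_cong2[where f = "(+)"] emeasure_lborel_translate) auto
  also have "\<dots> = emeasure lborel A"
    using Ab Asub s by (subst plus_emeasure) (auto intro!: arg_cong[where f = "emeasure lborel"])
  also have "\<dots> = emeasure uniform01 A"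
    using Asub by (simp add: emeasure_restrict_space)
  finally show "emeasure (distr uniform01 uniform01 (\<lambda>x. frac (x + t))) A = emeasure uniform01 A" .
qed simp

lemma nn_integral_torus_frac_shift:
  assumes G: "G \<in> borel_measurable (torus n)"
  shows "(\<integral>\<^sup>+ \<theta>. G (\<lambda>j\<in>{..<n}. frac (\<theta> j + t)) \<partial>torus n) = (\<integral>\<^sup>+ \<theta>. G \<theta> \<partial>torus n)"
proof -
  let ?shift = "compose {..<n} (\<lambda>x. frac (x + t))"
  have shift_meas: "?shift \<in> measurable (torus n) (torus n)"
    unfolding torus_def compose_def
    by (intro measurable_restrict measurable_compose[OF _ measurable_frac_shift_uniform01]
        measurable_component_singleton)
  have "distr (torus n) (torus n) ?shift = torus n"
    unfolding torus_def
    by (subst distr_PiM_finite_prob_space[OF _ product_prob_space_uniform01 product_prob_space_uniform01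
        measurable_frac_shift_uniform01]) (auto simp: distr_uniform01_frac_shift)
  then have "(\<integral>\<^sup>+ \<theta>. G \<theta> \<partial>torus n) = (\<integral>\<^sup>+ \<theta>. G \<theta> \<partial>distr (torus n) (torus n) ?shift)"
    by simp
  also have "\<dots> = (\<integral>\<^sup>+ \<theta>. G (?shift \<theta>) \<partial>torus n)"
    using G by (intro nn_integral_distr[OF shift_meas]) simp
  finally show ?thesis by (simp add: compose_def)
qed

lemma nn_integral_torus_Suc_rotation_invariant:
  fixes f :: "complex \<Rightarrow> ennreal"
  assumes f: "f \<in> borel_measurable borel"
    and rotation_invariant: "\<And>t z. f (e2pi t * z) = f z"
  shows "(\<integral>\<^sup>+ \<theta>. f (\<Sum>j<Suc n. a j * e2pi (\<theta> j)) \<partial>torus (Suc n))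
       = (\<integral>\<^sup>+ \<theta>. f ((\<Sum>j<n. a j * e2pi (\<theta> j)) + a n) \<partial>torus n)"
proof -
  interpret product_prob_space "\<lambda>_::nat. uniform01" by (rule product_prob_space_uniform01)
  define G where "G \<theta> = f ((\<Sum>j<n. a j * e2pi (\<theta> j)) + a n)" for \<theta> :: "nat \<Rightarrow> real"
  have G_meas: "G \<in> borel_measurable (torus n)"
    unfolding G_def torus_def
    by (rule measurable_compose[OF borel_measurable_add[OF measurable_sum_e2pi] f]) auto
  have shift_last: "f (\<Sum>j<Suc n. a j * e2pi ((x(n := y)) j)) = G (\<lambda>j\<in>{..<n}. frac (x j + - y))"
    for x :: "nat \<Rightarrow> real" and y
  proof -
    have "(\<Sum>j<n. a j * e2pi ((\<lambda>j\<in>{..<n}. frac (x j + - y)) j)) + a n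
        = e2pi (- y) * ((\<Sum>j<n. a j * e2pi (x j)) + a n * e2pi y)"
      using e2pi_uminus_mult[of y]
      by (simp add: distrib_left sum_distrib_left e2pi_add[of _ "- y", simplified] ac_simps)
    then show ?thesis
      by (simp add: G_def rotation_invariant)
  qed
  have "(\<integral>\<^sup>+ \<theta>. f (\<Sum>j<Suc n. a j * e2pi (\<theta> j)) \<partial>torus (Suc n))
      = (\<integral>\<^sup>+ y. (\<integral>\<^sup>+ x. f (\<Sum>j<Suc n. a j * e2pi ((x(n := y)) j)) \<partial>torus n) \<partial>uniform01)"
  proof -
    have torus_Suc: "torus (Suc n) = PiM (insert n {..<n}) (\<lambda>_. uniform01)"
      by (simp add: torus_def lessThan_Suc)
    have meas: "(\<lambda>\<theta>. f (\<Sum>j<Suc n. a j * e2pi (\<theta> j)))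
        \<in> borel_measurable (PiM (insert n {..<n}) (\<lambda>_. uniform01))"
      by (rule measurable_compose[OF measurable_sum_e2pi f]) auto
    show ?thesis
      unfolding torus_Suc unfolding torus_def by (rule product_nn_integral_insert_rev[OF _ _ meas]) auto
  qed
  also have "\<dots> = (\<integral>\<^sup>+ y. (\<integral>\<^sup>+ x. G x \<partial>torus n) \<partial>uniform01)"
    using nn_integral_torus_frac_shift[OF G_meas] by (simp only: shift_last)
  also have "\<dots> = (\<integral>\<^sup>+ x. G x \<partial>torus n)"
    by (simp add: emeasure_restrict_space)
  finally show ?thesis unfolding G_def .
qed

section \<open>A uniform bound on the circle\<close>

lemma sin_ge_half:
  fixes u :: real
  assumes "0 \<le> u" "u \<le> pi / 2"
  shows "u / 2 \<le> sin u"
proof -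
  have "\<bar>sin u - (\<Sum>m<3. sin_coeff m * u ^ m)\<bar> \<le> inverse (fact 3) * \<bar>u\<bar> ^ 3"
    by (rule Maclaurin_sin_bound)
  moreover have "(\<Sum>m<3. sin_coeff m * u ^ m) = u"
    by (simp add: numeral_3_eq_3 sin_coeff_def)
  ultimately have "\<bar>sin u - u\<bar> \<le> u ^ 3 / 6"
    using assms by (simp add: fact_numeral)
  then have "u - u ^ 3 / 6 \<le> sin u"
    using abs_le_D2 by fastforce
  moreover have "u ^ 2 \<le> 3"
  proof -
    have "pi \<le> 3.2" using pi_approx by simp
    then have "u ^ 2 \<le> 1.6 ^ 2" using assms by (intro power_mono) auto
    then show ?thesis by (simp add: power2_eq_square)
  qed
  then have "u ^ 3 / 6 \<le> u / 2"
    using assms by (auto simp: power3_eq_cube power2_eq_square mult_left_mono[of "u * u" 3 u, simplified])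
  ultimately show ?thesis by linarith
qed

lemma norm_e2pi_minus_1_ge:
  assumes "\<bar>x\<bar> \<le> 1 / 2"
  shows "2 * \<bar>x\<bar> \<le> norm (e2pi x - 1)"
proof -
  have "norm (e2pi x - 1) = 2 * \<bar>sin (2 * pi * x / 2)\<bar>"
    by (simp only: e2pi_conv_exp_i dist_exp_i_1)
  also have "\<bar>sin (2 * pi * x / 2)\<bar> = sin (pi * \<bar>x\<bar>)"
  proof -
    have "0 \<le> sin (pi * \<bar>x\<bar>)"
      using assms by (intro sin_ge_zero) auto
    then show ?thesis
      by (cases "0 \<le> x") (simp_all add: abs_of_neg)
  qed
  finally have "norm (e2pi x - 1) = 2 * sin (pi * \<bar>x\<bar>)" .
  moreover have "pi * \<bar>x\<bar> / 2 \<le> sin (pi * \<bar>x\<bar>)"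
    using assms by (intro sin_ge_half) auto
  moreover have "2 * \<bar>x\<bar> \<le> pi * \<bar>x\<bar>"
    using pi_gt3 by (intro mult_right_mono) auto
  ultimately show ?thesis by linarith
qed

lemma dist_e2pi_le_imp_near_int:
  assumes "norm (e2pi y - e2pi y0) \<le> 2 * s" "\<bar>y - y0\<bar> < 1"
  shows "\<exists>k\<in>{-1, 0, 1 :: real}. \<bar>y - y0 - k\<bar> \<le> s"
proof -
  define x where "x = y - y0"
  have "e2pi y - e2pi y0 = e2pi y0 * (e2pi x - 1)"
    using e2pi_add[of y0 x] by (simp add: x_def algebra_simps)
  then have close: "norm (e2pi x - 1) \<le> 2 * s"
    using assms(1) by (simp add: norm_mult)
  consider "x < - 1 / 2" | "1 / 2 < x" | "\<bar>x\<bar> \<le> 1 / 2" by linarith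
  then show ?thesis
  proof cases
    case 1
    then have "2 * \<bar>x + 1\<bar> \<le> norm (e2pi (x + 1) - 1)"
      using assms(2) by (intro norm_e2pi_minus_1_ge) (auto simp: x_def)
    then show ?thesis using close by (auto simp: x_def intro!: bexI[of _ "- 1"])
  next
    case 2
    then have "2 * \<bar>x - 1\<bar> \<le> norm (e2pi (x - 1) - 1)"
      using assms(2) by (intro norm_e2pi_minus_1_ge) (auto simp: x_def)
    then show ?thesis using close by (auto simp: x_def intro!: bexI[of _ 1])
  next
    case 3
    then have "2 * \<bar>x\<bar> \<le> norm (e2pi x - 1)" by (rule norm_e2pi_minus_1_ge)
    then show ?thesis using close by (auto simp: x_def intro!: bexI[of _ 0])
  qed
qed

text \<open>Any two points of the set are \<open>2 s\<close>-close on the circle, so by the chord bound the set lies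
  within \<open>s\<close> of one of them modulo \<open>1\<close>.\<close>
lemma emeasure_e2pi_sublevel_le:
  assumes "0 \<le> s"
  shows "emeasure uniform01 {y\<in>{0..<1}. norm (e2pi y - p) \<le> s} \<le> ennreal (6 * s)"
proof (cases "{y\<in>{0..<1}. norm (e2pi y - p) \<le> s} = {}")
  case True
  then show ?thesis by (simp only: emeasure_empty zero_le)
next
  case False
  define S where "S = {y\<in>{0..<1}. norm (e2pi y - p) \<le> s}"
  from False obtain y0 where y0: "y0 \<in> S" unfolding S_def by blast
  define I where "I k = {y0 + k - s .. y0 + k + s}" for k :: real
  have cover: "S \<subseteq> I (- 1) \<union> I 0 \<union> I 1"
  proof
    fix y assume y: "y \<in> S"
    have "norm (e2pi y - e2pi y0) \<le> norm (e2pi y - p) + norm (e2pi y0 - p)"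
      using norm_triangle_ineq4[of "e2pi y - p" "e2pi y0 - p"] by simp
    also have "\<dots> \<le> 2 * s" using y y0 by (simp add: S_def)
    finally have "norm (e2pi y - e2pi y0) \<le> 2 * s" .
    moreover have "\<bar>y - y0\<bar> < 1" using y y0 by (auto simp: S_def)
    ultimately obtain k where "k \<in> {- 1, 0, 1 :: real}" "\<bar>y - y0 - k\<bar> \<le> s"
      using dist_e2pi_le_imp_near_int by blast
    then show "y \<in> I (- 1) \<union> I 0 \<union> I 1" by (auto simp: I_def abs_le_iff)
  qed
  have "emeasure uniform01 S = emeasure lborel S"
    by (subst emeasure_restrict_space) (auto simp: S_def)
  also have "\<dots> \<le> emeasure lborel (I (- 1) \<union> I 0 \<union> I 1)"
    by (rule emeasure_mono[OF cover]) (auto simp: I_def)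
  also have "\<dots> \<le> emeasure lborel (I (- 1)) + emeasure lborel (I 0) + emeasure lborel (I 1)"
    by (intro order_trans[OF emeasure_subadditive] add_right_mono emeasure_subadditive) (auto simp: I_def)
  also have "\<dots> = ennreal (6 * s)"
    using assms by (simp add: I_def ennreal_plus[symmetric] del: ennreal_plus)
  finally show ?thesis unfolding S_def .
qed

lemma dyadic_bracket_ex:
  fixes x :: real
  assumes "0 < x" "x < 1"
  shows "\<exists>k. (1 / 2) ^ Suc k < x \<and> x \<le> (1 / 2) ^ k"
proof (rule ccontr)
  assume no_bracket: "\<not> ?thesis"
  have "x \<le> (1 / 2) ^ k" for k
  proof (induction k)
    case 0
    then show ?case using assms by simp
  next
    case (Suc k)
    then show ?case using no_bracket not_less by blast
  qed
  moreover obtain n where "(1 / 2 :: real) ^ n < x"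
    using real_arch_pow_inv[OF assms(1), of "1 / 2"] by auto
  ultimately show False by (meson not_less)
qed

lemma suminf_ennreal_power_Suc_eq_top:
  fixes b :: real
  assumes "1 \<le> b"
  shows "(\<Sum>k. ennreal (b ^ Suc k)) = top"
proof (rule summable_iff_suminf_neq_top)
  show "0 \<le> b ^ Suc k" for k using assms by simp
  show "\<not> summable (\<lambda>k. b ^ Suc k)"
  proof
    assume "summable (\<lambda>k. b ^ Suc k)"
    then have "(\<lambda>k. b ^ Suc k) \<longlonglongrightarrow> 0" by (rule summable_LIMSEQ_zero)
    moreover have "1 \<le> b ^ Suc k" for k by (rule one_le_power[OF assms])
    ultimately have "1 \<le> (0 :: real)" by (intro LIMSEQ_le_const) auto
    then show False by simp
  qed
qed

lemma ennreal_le_suminf: "(f k :: ennreal) \<le> (\<Sum>k. f k)"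
  using sum_le_suminf[OF summableI, of "{k}" f] by simp

text \<open>On the shell \<open>2\<^sup>-\<^sup>k\<^sup>-\<^sup>1 < \<bar>z\<bar> \<le> 2\<^sup>-\<^sup>k\<close> the \<open>k\<close>-th summand alone dominates; at \<open>z = 0\<close> all
  indicators are \<open>1\<close> and the series diverges, matching \<open>inv_abs_powr d 0 = \<infinity>\<close>.\<close>
lemma inv_abs_powr_le_dyadic_sum:
  assumes "0 < d"
  shows "inv_abs_powr d z
    \<le> 1 + (\<Sum>k. ennreal ((2 powr d) ^ Suc k) * indicator {z. norm z \<le> (1 / 2) ^ k} z)"
proof -
  have b: "1 \<le> 2 powr d" using assms by (simp add: ge_one_powr_ge_zero)
  consider "z = 0" | "1 \<le> norm z" | "0 < norm z" "norm z < 1" by force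
  then show ?thesis
  proof cases
    case 1
    then have "(\<Sum>k. ennreal ((2 powr d) ^ Suc k) * indicator {z. norm z \<le> (1 / 2) ^ k} z)
        = (\<Sum>k. ennreal ((2 powr d) ^ Suc k))"
      by simp
    then show ?thesis using suminf_ennreal_power_Suc_eq_top[OF b] by simp
  next
    case 2
    then have "inv_abs_powr d z \<le> 1"
      using assms by (auto simp: inv_abs_powr_def ge_one_powr_ge_zero)
    then show ?thesis by (rule order_trans) simp
  next
    case 3
    obtain k where k: "(1 / 2) ^ Suc k < norm z" "norm z \<le> (1 / 2) ^ k"
      using dyadic_bracket_ex[OF 3] by blast
    have "1 / norm z powr d \<le> 1 / ((1 / 2) ^ Suc k) powr d"
      using k 3 assms by (intro divide_left_mono powr_mono2) auto
    also have "\<dots> = (2 powr d) ^ Suc k"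
    proof -
      have pow: "(2 powr d) ^ Suc k = 2 powr (real (Suc k) * d)"
        by (rule powr_power) simp
      have inv_pow: "((1 / 2 :: real) ^ Suc k) powr d = 1 / 2 powr (real (Suc k) * d)"
        by (simp only: power_one_over powr_divide powr_one powr_realpow[symmetric] powr_powr) simp
      show ?thesis unfolding pow inv_pow by simp
    qed
    finally have "inv_abs_powr d z \<le> ennreal ((2 powr d) ^ Suc k) * indicator {z. norm z \<le> (1 / 2) ^ k} z"
      using 3 k by (auto simp: inv_abs_powr_def)
    also have "\<dots> \<le> (\<Sum>k. ennreal ((2 powr d) ^ Suc k) * indicator {z. norm z \<le> (1 / 2) ^ k} z)"
      by (rule ennreal_le_suminf)
    finally show ?thesis by (rule order_trans) simp
  qed
qed

text \<open>The constant is \<open>1 + \<Sum>\<^sub>k 2\<^sup>(\<^sup>k\<^sup>+\<^sup>1\<^sup>)\<^sup>d \<cdot> 6 \<cdot> 2\<^sup>-\<^sup>k\<close>: the \<open>k\<close>-th dyadic shell has measure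
  at most \<open>6 \<cdot> 2\<^sup>-\<^sup>k\<close>, and the series converges because \<open>d < 1\<close>.\<close>
definition circle_constant :: "real \<Rightarrow> real" where
  "circle_constant d = 1 + 6 * 2 powr d / (1 - 2 powr d / 2)"

lemma circle_constant_pos:
  assumes "0 < d" "d < 1"
  shows "0 < circle_constant d"
proof -
  have "2 powr d < (2 :: real)"
    using assms powr_less_mono[of d 1 "2 :: real"] by simp
  then have "0 \<le> 6 * 2 powr d / (1 - 2 powr d / (2 :: real))"
    by (intro divide_nonneg_pos) auto
  then show ?thesis by (simp add: circle_constant_def)
qed

lemma nn_integral_inv_abs_powr_e2pi_diff_le:
  assumes d: "0 < d" "d < 1"
  shows "(\<integral>\<^sup>+ y. inv_abs_powr d (e2pi y - p) \<partial>uniform01) \<le> ennreal (circle_constant d)"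
proof -
  define b where "b = (2 :: real) powr d"
  have b1: "1 \<le> b" using d by (simp add: b_def ge_one_powr_ge_zero)
  have b2: "b < 2" using d powr_less_mono[of d 1 "2 :: real"] by (simp add: b_def)
  define S where "S k = {y\<in>{0..<1}. norm (e2pi y - p) \<le> (1 / 2 :: real) ^ k}" for k :: nat
  have S_sets [measurable]: "S k \<in> sets uniform01" for k
  proof -
    have "{y. norm (e2pi y - p) \<le> (1 / 2) ^ k} \<in> sets borel" by measurable
    then show ?thesis by (auto simp: S_def sets_restrict_space_iff Collect_conj_eq)
  qed
  have "(\<integral>\<^sup>+ y. inv_abs_powr d (e2pi y - p) \<partial>uniform01)
      \<le> (\<integral>\<^sup>+ y. 1 + (\<Sum>k. ennreal (b ^ Suc k) * indicator (S k) y) \<partial>uniform01)"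
  proof (rule nn_integral_mono)
    fix y assume "y \<in> space uniform01"
    then have "indicator {z. norm z \<le> (1 / 2 :: real) ^ k} (e2pi y - p) = (indicator (S k) y :: ennreal)" for k
      by (auto simp: S_def indicator_def)
    then show "inv_abs_powr d (e2pi y - p) \<le> 1 + (\<Sum>k. ennreal (b ^ Suc k) * indicator (S k) y)"
      using inv_abs_powr_le_dyadic_sum[OF d(1), of "e2pi y - p"] by (simp add: b_def)
  qed
  also have "\<dots> = (\<integral>\<^sup>+ y. 1 \<partial>uniform01) + (\<Sum>k. ennreal (b ^ Suc k) * emeasure uniform01 (S k))"
    by (simp add: nn_integral_add nn_integral_suminf nn_integral_cmult_indicator)
  also have "(\<Sum>k. ennreal (b ^ Suc k) * emeasure uniform01 (S k)) \<le> (\<Sum>k. ennreal (6 * b * (b / 2) ^ k))"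
  proof (rule suminf_le[OF _ summableI summableI])
    fix k
    have "ennreal (b ^ Suc k) * emeasure uniform01 (S k) \<le> ennreal (b ^ Suc k) * ennreal (6 * (1 / 2) ^ k)"
      unfolding S_def by (intro mult_left_mono emeasure_e2pi_sublevel_le) auto
    also have "\<dots> = ennreal (6 * b * (b / 2) ^ k)"
      using b1 by (simp add: ennreal_mult[symmetric] power_divide field_simps)
    finally show "ennreal (b ^ Suc k) * emeasure uniform01 (S k) \<le> ennreal (6 * b * (b / 2) ^ k)" .
  qed
  also have "(\<Sum>k. ennreal (6 * b * (b / 2) ^ k)) = ennreal (6 * b / (1 - b / 2))"
    using b1 b2 by (subst suminf_ennreal2) (auto simp: suminf_mult suminf_geometric summable_geometric)
  finally have "(\<integral>\<^sup>+ y. inv_abs_powr d (e2pi y - p) \<partial>uniform01) \<le> 1 + ennreal (6 * b / (1 - b / 2))"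
    by (simp add: add_left_mono emeasure_restrict_space)
  also have "\<dots> = ennreal (circle_constant d)"
  proof -
    have "0 \<le> 6 * b / (1 - b / 2)"
      using b1 b2 by (intro divide_nonneg_pos) auto
    then show ?thesis
      using ennreal_plus[of 1 "6 * b / (1 - b / 2)"] by (simp add: circle_constant_def b_def)
  qed
  finally show ?thesis .
qed

lemma nn_integral_inv_abs_powr_affine_e2pi_le:
  assumes "0 < d" "d < 1" "A \<noteq> 0"
  shows "(\<integral>\<^sup>+ y. inv_abs_powr d (w + A * e2pi y) \<partial>uniform01) \<le> ennreal (circle_constant d / norm A powr d)"
proof -
  have "w + A * e2pi y = A * (e2pi y - (- w / A))" for y
    using assms by (simp add: field_simps)
  then have "(\<integral>\<^sup>+ y. inv_abs_powr d (w + A * e2pi y) \<partial>uniform01)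
      = ennreal (1 / norm A powr d) * (\<integral>\<^sup>+ y. inv_abs_powr d (e2pi y - (- w / A)) \<partial>uniform01)"
    using assms by (simp add: inv_abs_powr_mult nn_integral_cmult measurable_restrict_space1)
  also have "\<dots> \<le> ennreal (1 / norm A powr d) * ennreal (circle_constant d)"
    using assms by (intro mult_left_mono nn_integral_inv_abs_powr_e2pi_diff_le) auto
  also have "\<dots> = ennreal (circle_constant d / norm A powr d)"
    using circle_constant_pos[OF assms(1,2)] by (simp add: ennreal_mult[symmetric])
  finally show ?thesis .
qed

section \<open>Bounds on the torus\<close>

lemma inv_powr_le_inv_abs_powr:
  assumes "0 \<le> d" "norm z \<le> r"
  shows "inv_powr d r \<le> inv_abs_powr d z"
proof (cases "z = 0")
  case False
  then have "1 / r powr d \<le> 1 / norm z powr d"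
    using assms by (intro divide_left_mono powr_mono2 mult_pos_pos) auto
  then show ?thesis
    using False assms by (auto simp: inv_abs_powr_def inv_powr_def)
qed (simp add: inv_abs_powr_def)

lemma nn_integral_torus_inv_abs_powr_ge:
  assumes "0 \<le> d"
  shows "inv_powr d (\<Sum>j<J. norm (a j))
    \<le> (\<integral>\<^sup>+ \<theta>. inv_abs_powr d (\<Sum>j<J. a j * e2pi (\<theta> j)) \<partial>torus J)"
proof -
  have "norm (\<Sum>j<J. a j * e2pi (\<theta> j)) \<le> (\<Sum>j<J. norm (a j))" for \<theta> :: "nat \<Rightarrow> real"
    using norm_sum[of "\<lambda>j. a j * e2pi (\<theta> j)" "{..<J}"] by (simp add: norm_mult)
  then have "(\<integral>\<^sup>+ \<theta>. inv_powr d (\<Sum>j<J. norm (a j)) \<partial>torus J)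
      \<le> (\<integral>\<^sup>+ \<theta>. inv_abs_powr d (\<Sum>j<J. a j * e2pi (\<theta> j)) \<partial>torus J)"
    using assms by (intro nn_integral_mono inv_powr_le_inv_abs_powr)
  then show ?thesis
    by (simp add: torus_def emeasure_space_PiM_uniform01)
qed

lemma nn_integral_torus_inv_abs_powr_le_coeff:
  assumes d: "0 < d" "d < 1" and m: "m < J" "a m \<noteq> 0"
  shows "(\<integral>\<^sup>+ \<theta>. inv_abs_powr d (\<Sum>j<J. a j * e2pi (\<theta> j)) \<partial>torus J)
    \<le> ennreal (circle_constant d / norm (a m) powr d)"
proof -
  interpret product_prob_space "\<lambda>_::nat. uniform01" by (rule product_prob_space_uniform01)
  define I where "I = {..<J} - {m}"
  have I: "insert m I = {..<J}" "m \<notin> I" "finite I"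
    using m by (auto simp: I_def)
  have sum_split: "(\<Sum>j<J. a j * e2pi ((x(m := y)) j)) = (\<Sum>j\<in>I. a j * e2pi (x j)) + a m * e2pi y"
    for x y
  proof -
    have "(\<Sum>j<J. a j * e2pi ((x(m := y)) j)) = (\<Sum>j\<in>insert m I. a j * e2pi ((x(m := y)) j))"
      unfolding I(1) ..
    also have "\<dots> = a m * e2pi y + (\<Sum>j\<in>I. a j * e2pi ((x(m := y)) j))"
      using sum.insert[OF I(3,2), of "\<lambda>j. a j * e2pi ((x(m := y)) j)"] by simp
    also have "(\<Sum>j\<in>I. a j * e2pi ((x(m := y)) j)) = (\<Sum>j\<in>I. a j * e2pi (x j))"
      using I by (intro sum.cong) auto
    finally show ?thesis by simp
  qed
  have meas: "(\<lambda>\<theta>. inv_abs_powr d (\<Sum>j<J. a j * e2pi (\<theta> j)))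
      \<in> borel_measurable (PiM (insert m I) (\<lambda>_. uniform01))"
    by (rule measurable_compose[OF measurable_sum_e2pi borel_measurable_inv_abs_powr]) (use I in auto)
  have "(\<integral>\<^sup>+ \<theta>. inv_abs_powr d (\<Sum>j<J. a j * e2pi (\<theta> j)) \<partial>torus J)
      = (\<integral>\<^sup>+ x. (\<integral>\<^sup>+ y. inv_abs_powr d (\<Sum>j<J. a j * e2pi ((x(m := y)) j)) \<partial>uniform01)
          \<partial>PiM I (\<lambda>_. uniform01))"
    unfolding torus_def I(1)[symmetric, THEN arg_cong[where f = "\<lambda>K. PiM K (\<lambda>_. uniform01)"]]
    by (rule product_nn_integral_insert[OF I(3,2) meas])
  also have "\<dots> \<le> (\<integral>\<^sup>+ x. ennreal (circle_constant d / norm (a m) powr d) \<partial>PiM I (\<lambda>_. uniform01))"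
    using nn_integral_inv_abs_powr_affine_e2pi_le[OF d m(2)]
    by (intro nn_integral_mono) (simp only: sum_split)
  also have "\<dots> = ennreal (circle_constant d / norm (a m) powr d)"
    by (simp add: emeasure_space_PiM_uniform01)
  finally show ?thesis .
qed

lemma nn_integral_torus_inv_abs_powr_le:
  assumes d: "0 < d" "d < 1" and J: "1 \<le> J"
  shows "(\<integral>\<^sup>+ \<theta>. inv_abs_powr d (\<Sum>j<J. a j * e2pi (\<theta> j)) \<partial>torus J)
    \<le> ennreal (circle_constant d * real J powr d) * inv_powr d (\<Sum>j<J. norm (a j))"
proof (cases "(\<Sum>j<J. norm (a j)) = 0")
  case True
  then show ?thesis
    using circle_constant_pos[OF d] J by (simp add: inv_powr_def ennreal_mult_top)
next
  case False
  define S where "S = (\<Sum>j<J. norm (a j))"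
  have S: "0 < S" using False by (simp add: S_def sum_nonneg order_le_neq_trans)
  have "Max ((\<lambda>j. norm (a j)) ` {..<J}) \<in> (\<lambda>j. norm (a j)) ` {..<J}"
    using J by (intro Max_in) (auto simp: lessThan_empty_iff)
  then obtain m where m: "m < J" "norm (a m) = Max ((\<lambda>j. norm (a j)) ` {..<J})"
    by auto
  then have "S \<le> (\<Sum>j<J. norm (a m))"
    unfolding S_def by (intro sum_mono) simp
  then have S_le: "S \<le> real J * norm (a m)" by simp
  with S have am: "a m \<noteq> 0" by auto
  have "(\<integral>\<^sup>+ \<theta>. inv_abs_powr d (\<Sum>j<J. a j * e2pi (\<theta> j)) \<partial>torus J)
      \<le> ennreal (circle_constant d / norm (a m) powr d)"
    by (rule nn_integral_torus_inv_abs_powr_le_coeff[where a = a, OF d m(1) am])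
  also have "\<dots> \<le> ennreal (circle_constant d * real J powr d / S powr d)"
  proof (intro ennreal_leI)
    have "S powr d \<le> real J powr d * norm (a m) powr d"
      using S_le S d by (simp add: powr_mult[symmetric] powr_mono2)
    then show "circle_constant d / norm (a m) powr d \<le> circle_constant d * real J powr d / S powr d"
      using circle_constant_pos[OF d] am S by (simp add: field_simps)
  qed
  also have "\<dots> = ennreal (circle_constant d * real J powr d) * inv_powr d S"
    using S circle_constant_pos[OF d] by (simp add: inv_powr_def ennreal_mult[symmetric])
  finally show ?thesis by (simp add: S_def)
qed

theorem lemma4p4:
  fixes \<delta> :: real and J :: nat
  assumes "0 < \<delta>" and "\<delta> < 1" and "1 \<le> J"
  shows "\<exists>c C :: real. 0 < c \<and> 0 < C \<and>
    (\<forall>a :: nat \<Rightarrow> complex.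
      (\<integral>\<^sup>+ \<theta>. inv_abs_powr \<delta> (\<Sum>j<J. a j * e2pi (\<theta> j)) \<partial>torus J)
        = (\<integral>\<^sup>+ \<theta>. inv_abs_powr \<delta> ((\<Sum>j<J - 1. a j * e2pi (\<theta> j)) + a (J - 1)) \<partial>torus (J - 1))
      \<and> ennreal c * inv_powr \<delta> (\<Sum>j<J. norm (a j))
          \<le> (\<integral>\<^sup>+ \<theta>. inv_abs_powr \<delta> (\<Sum>j<J. a j * e2pi (\<theta> j)) \<partial>torus J)
      \<and> (\<integral>\<^sup>+ \<theta>. inv_abs_powr \<delta> (\<Sum>j<J. a j * e2pi (\<theta> j)) \<partial>torus J)
          \<le> ennreal C * inv_powr \<delta> (\<Sum>j<J. norm (a j)))"
proof (intro exI conjI allI)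
  show "0 < (1 :: real)" by simp
  show "0 < circle_constant \<delta> * real J powr \<delta>"
    using circle_constant_pos[OF assms(1,2)] assms(3) by simp
  fix a :: "nat \<Rightarrow> complex"
  obtain n where n: "J = Suc n" using assms(3) by (cases J) auto
  show "(\<integral>\<^sup>+ \<theta>. inv_abs_powr \<delta> (\<Sum>j<J. a j * e2pi (\<theta> j)) \<partial>torus J)
      = (\<integral>\<^sup>+ \<theta>. inv_abs_powr \<delta> ((\<Sum>j<J - 1. a j * e2pi (\<theta> j)) + a (J - 1)) \<partial>torus (J - 1))"
    unfolding n using nn_integral_torus_Suc_rotation_invariant[of "inv_abs_powr \<delta>"]
    by (simp add: inv_abs_powr_unit_mult)
  show "ennreal 1 * inv_powr \<delta> (\<Sum>j<J. norm (a j))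
      \<le> (\<integral>\<^sup>+ \<theta>. inv_abs_powr \<delta> (\<Sum>j<J. a j * e2pi (\<theta> j)) \<partial>torus J)"
    using nn_integral_torus_inv_abs_powr_ge[where a = a] assms(1) by simp
  show "(\<integral>\<^sup>+ \<theta>. inv_abs_powr \<delta> (\<Sum>j<J. a j * e2pi (\<theta> j)) \<partial>torus J)
      \<le> ennreal (circle_constant \<delta> * real J powr \<delta>) * inv_powr \<delta> (\<Sum>j<J. norm (a j))"
    by (rule nn_integral_torus_inv_abs_powr_le[OF assms])
qed

end
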